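(* Let $A$ be a double Poisson algebra and $(M,\{\!\{-,-\}\!\}_M)$ a double Poisson $A$-bimodule. Then the brackets $\{-,-\}_M=\mu_M\circ\{\!\{-,-\}\!\}_M$ and $\{-,-\}_{M,\natural}=\natural\circ\{-,-\}_M$ make $M$ and $M_\natural=M/[A,M]$, respectively, into Lie modules over the Lie algebra $(A_\natural,\{-,-\})$, where $A_\natural=A/[A,A]$ and $\{-,-\}=\mu\circ\{\!\{-,-\}\!\}$.
   Context: $A$ is a unital associative $k$-algebra and $\mu$ its multiplication. A double bracket on $A$ is a bilinear map $\{\!\{-,-\}\!\}:A\times A\to A\otimes A$ with $\{\!\{a,b\}\!\}=-\{\!\{b,a\}\!\}^\circ$ ($(u\otimes v)^\circ=v\otimes u$) and $\{\!\{a,bc\}\!\}=b\{\!\{a,c\}\!\}+\{\!\{a,b\}\!\}c$ for the outer bimodule structure $b(a_1\otimes a_2)c=ba_1\otimes a_2c$; the inner structure is $b*(a_1\otimes a_2)*c=a_1c\otimes ba_2$. With $\{\!\{a,b_1\otimes\cdots\otimes b_n\}\!\}_L=\{\!\{a,b_1\}\!\}\otimes b_2\otimes\cdots\otimes b_n$ and $\sigma_s(b_1\otimes\cdots\otimes b_n)=b_{s^{-1}(1)}\otimes\cdots\otimes b_{s^{-1}(n)}$, $A$ is a double Poisson algebra if $\{\!\{a,\{\!\{b,c\}\!\}\}\!\}_L+\sigma_{(123)}\{\!\{b,\{\!\{c,a\}\!\}\}\!\}_L+\sigma_{(132)}\{\!\{c,\{\!\{a,b\}\!\}\}\!\}_L=0$;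 then $\{-,-\}$ induces a Lie bracket on $A_\natural$. For an $A$-bimodule $M$, a double Poisson bracket on $M$ is a bilinear $\{\!\{-,-\}\!\}_M:A\times M\to(A\otimes M)\oplus(M\otimes A)$ with (i) $\{\!\{a,bm\}\!\}_M=\{\!\{a,b\}\!\}m+b\{\!\{a,m\}\!\}_M$, $\{\!\{a,mb\}\!\}_M=\{\!\{a,m\}\!\}_Mb+m\{\!\{a,b\}\!\}$; (ii) $\{\!\{ab,m\}\!\}_M=a*\{\!\{b,m\}\!\}_M+\{\!\{a,m\}\!\}_M*b$. Put $\{\!\{m,b\}\!\}_M=-(\{\!\{b,m\}\!\}_M)^\circ$; if $\{\!\{b,m\}\!\}_M=(b_1\otimes m_1)\oplus(m_2\otimes b_2)$ set $\{\!\{a,\{\!\{b,m\}\!\}_M\}\!\}_L=(\{\!\{a,b_1\}\!\}\otimes m_1)\oplus(\{\!\{a,m_2\}\!\}_M\otimes b_2)$, and $\{\!\{m,\{\!\{a,b\}\!\}\}\!\}_L=\{\!\{m,\{\!\{a,b\}\!\}'\}\!\}_M\otimes\{\!\{a,b\}\!\}''$. $M$ is a double Poisson $A$-bimodule if also (iii) $\{\!\{a,\{\!\{b,m\}\!\}_M\}\!\}_L+\sigma_{(123)}\{\!\{b,\{\!\{m,a\}\!\}_M\}\!\}_L+\sigma_{(132)}\{\!\{m,\{\!\{a,b\}\!\}\}\!\}_L=0$. $\mu_M$ is the bimodule action map $(A\otimes M)\oplus(M\otimes A)\to M$ and $\natural:M\to M_\natural$ the projection. $\{-,-\}_M$ induces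 a map $A_\natural\times M\to M$ and $\{-,-\}_{M,\natural}$ a map $A_\natural\times M_\natural\to M_\natural$. *)

theory Defs
  imports Main "HOL-Library.Poly_Mapping"
begin

text \<open>Elements of a tensor product  X1 \<otimes>_k ... \<otimes>_k Xn  are represented by finitely supported
  integer combinations of words (lists), i.e. elements of type  word =>0 int.
  Two representatives are equal in the tensor product iff their difference lies in the
  subgroup generated by the multi-additivity and k-balancing relations.
  The parameter add3 s x y says that x and y are letters of the same sort and s = x + y;
  sc c x is the action of the scalar c :: 'k on a letter x.\<close>

inductive_set trel :: "('k \<Rightarrow> 'v \<Rightarrow> 'v) \<Rightarrow> ('v \<Rightarrow> 'v \<Rightarrow> 'v \<Rightarrow> bool) \<Rightarrow> ('v list \<Rightarrow>\<^sub>0 int) set"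
  for sc :: "'k \<Rightarrow> 'v \<Rightarrow> 'v" and add3 :: "'v \<Rightarrow> 'v \<Rightarrow> 'v \<Rightarrow> bool" where
  tr_add: "add3 s x y \<Longrightarrow>
     frag_of (u @ s # v) - frag_of (u @ x # v) - frag_of (u @ y # v) \<in> trel sc add3"
| tr_bal: "frag_of (u @ sc c x # v @ y # w) - frag_of (u @ x # v @ sc c y # w) \<in> trel sc add3"
| tr_zero: "0 \<in> trel sc add3"
| tr_plus: "p \<in> trel sc add3 \<Longrightarrow> q \<in> trel sc add3 \<Longrightarrow> p + q \<in> trel sc add3"
| tr_neg: "p \<in> trel sc add3 \<Longrightarrow> - p \<in> trel sc add3"

definition teq :: "('k \<Rightarrow> 'v \<Rightarrow> 'v) \<Rightarrow> ('v \<Rightarrow> 'v \<Rightarrow> 'v \<Rightarrow> bool)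
    \<Rightarrow> ('v list \<Rightarrow>\<^sub>0 int) \<Rightarrow> ('v list \<Rightarrow>\<^sub>0 int) \<Rightarrow> bool" where
  "teq sc add3 x y \<longleftrightarrow> x - y \<in> trel sc add3"

definition lmap :: "('w \<Rightarrow> 'u) \<Rightarrow> ('w \<Rightarrow>\<^sub>0 int) \<Rightarrow> ('u \<Rightarrow>\<^sub>0 int)" where
  "lmap f T = frag_extend (\<lambda>w. frag_of (f w)) T"

fun map_first :: "('v \<Rightarrow> 'v) \<Rightarrow> 'v list \<Rightarrow> 'v list" where
  "map_first f [] = []"
| "map_first f (x # xs) = f x # xs"

definition map_last :: "('v \<Rightarrow> 'v) \<Rightarrow> 'v list \<Rightarrow> 'v list" where
  "map_last f xs = (if xs = [] then [] else butlast xs @ [f (last xs)])"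

fun rot123 :: "'v list \<Rightarrow> 'v list" where
  "rot123 [x, y, z] = [z, x, y]"
| "rot123 w = w"

fun rot132 :: "'v list \<Rightarrow> 'v list" where
  "rot132 [x, y, z] = [y, z, x]"
| "rot132 w = w"

definition zmul :: "int \<Rightarrow> 'g::ab_group_add \<Rightarrow> 'g" where
  "zmul n x = (if 0 \<le> n then (\<Sum>i<nat n. x) else - (\<Sum>i<nat (- n). x))"

definition fsum :: "('w \<Rightarrow> 'g::ab_group_add) \<Rightarrow> ('w \<Rightarrow>\<^sub>0 int) \<Rightarrow> 'g" where
  "fsum f T = (\<Sum>w\<in>Poly_Mapping.keys T. zmul (Poly_Mapping.lookup T w) (f w))"

definition k_algebra :: "('k::field \<Rightarrow> 'a::ring_1) \<Rightarrow> bool" where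
  "k_algebra \<iota> \<longleftrightarrow> \<iota> 1 = 1 \<and> (\<forall>c d. \<iota> (c + d) = \<iota> c + \<iota> d) \<and> (\<forall>c d. \<iota> (c * d) = \<iota> c * \<iota> d)
     \<and> (\<forall>c a. \<iota> c * a = a * \<iota> c)"

definition bimodule :: "('k::field \<Rightarrow> 'a::ring_1) \<Rightarrow> ('a \<Rightarrow> 'm::ab_group_add \<Rightarrow> 'm) \<Rightarrow> ('m \<Rightarrow> 'a \<Rightarrow> 'm) \<Rightarrow> bool" where
  "bimodule \<iota> lm rm \<longleftrightarrow>
     (\<forall>a b m. lm (a * b) m = lm a (lm b m)) \<and> (\<forall>m. lm 1 m = m) \<and>
     (\<forall>a b m. lm (a + b) m = lm a m + lm b m) \<and> (\<forall>a m n. lm a (m + n) = lm a m + lm a n) \<and>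
     (\<forall>a b m. rm m (a * b) = rm (rm m a) b) \<and> (\<forall>m. rm m 1 = m) \<and>
     (\<forall>a b m. rm m (a + b) = rm m a + rm m b) \<and> (\<forall>a m n. rm (m + n) a = rm m a + rm n a) \<and>
     (\<forall>a b m. lm a (rm m b) = rm (lm a m) b) \<and>
     (\<forall>c m. lm (\<iota> c) m = rm m (\<iota> c))"

text \<open>Tensor powers of A: words over 'a.\<close>
definition teqA :: "('k \<Rightarrow> 'a::ring_1) \<Rightarrow> ('a list \<Rightarrow>\<^sub>0 int) \<Rightarrow> ('a list \<Rightarrow>\<^sub>0 int) \<Rightarrow> bool" where
  "teqA \<iota> = teq (\<lambda>c a. \<iota> c * a) (\<lambda>s x y. s = x + y)"

text \<open>A double bracket takes values in A tensor A, represented by finite integer combinations of pairs.\<close>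
definition w2A :: "('a \<times> 'a \<Rightarrow>\<^sub>0 int) \<Rightarrow> ('a list \<Rightarrow>\<^sub>0 int)" where
  "w2A T = lmap (\<lambda>(x, y). [x, y]) T"

definition double_bracket :: "('k::field \<Rightarrow> 'a::ring_1) \<Rightarrow> ('a \<Rightarrow> 'a \<Rightarrow> ('a \<times> 'a \<Rightarrow>\<^sub>0 int)) \<Rightarrow> bool" where
  "double_bracket \<iota> dbr \<longleftrightarrow>
    (\<forall>a a' b. teqA \<iota> (w2A (dbr (a + a') b)) (w2A (dbr a b) + w2A (dbr a' b))) \<and>
    (\<forall>a b b'. teqA \<iota> (w2A (dbr a (b + b'))) (w2A (dbr a b) + w2A (dbr a b'))) \<and>
    (\<forall>c a b. teqA \<iota> (w2A (dbr (\<iota> c * a) b)) (lmap (map_first (\<lambda>x. \<iota> c * x)) (w2A (dbr a b)))) \<and>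
    (\<forall>c a b. teqA \<iota> (w2A (dbr a (\<iota> c * b))) (lmap (map_first (\<lambda>x. \<iota> c * x)) (w2A (dbr a b)))) \<and>
    (\<forall>a b. teqA \<iota> (w2A (dbr a b)) (- lmap rev (w2A (dbr b a)))) \<and>
    (\<forall>a b c. teqA \<iota> (w2A (dbr a (b * c)))
        (lmap (map_first (\<lambda>x. b * x)) (w2A (dbr a c)) + lmap (map_last (\<lambda>x. x * c)) (w2A (dbr a b))))"

definition dbLA :: "('a \<Rightarrow> 'a \<Rightarrow> ('a \<times> 'a \<Rightarrow>\<^sub>0 int)) \<Rightarrow> 'a \<Rightarrow> ('a list \<Rightarrow>\<^sub>0 int) \<Rightarrow> ('a list \<Rightarrow>\<^sub>0 int)" where
  "dbLA dbr a T = frag_extend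
     (\<lambda>w. case w of [] \<Rightarrow> 0 | y # r \<Rightarrow> lmap (\<lambda>u. u @ r) (w2A (dbr a y))) T"

definition double_poisson_algebra :: "('k::field \<Rightarrow> 'a::ring_1) \<Rightarrow> ('a \<Rightarrow> 'a \<Rightarrow> ('a \<times> 'a \<Rightarrow>\<^sub>0 int)) \<Rightarrow> bool" where
  "double_poisson_algebra \<iota> dbr \<longleftrightarrow> k_algebra \<iota> \<and> double_bracket \<iota> dbr \<and>
    (\<forall>a b c. teqA \<iota>
       (dbLA dbr a (w2A (dbr b c)) + lmap rot123 (dbLA dbr b (w2A (dbr c a)))
          + lmap rot132 (dbLA dbr c (w2A (dbr a b)))) 0)"

text \<open>Letters of sort A (Inl) or M (Inr); tensor products of copies of A and M are words over
  'a + 'm (all sort patterns together form a direct sum).\<close>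

fun lact_v :: "('a \<Rightarrow> 'm \<Rightarrow> 'm) \<Rightarrow> 'a::ring_1 \<Rightarrow> 'a + 'm \<Rightarrow> 'a + 'm" where
  "lact_v lm b (Inl x) = Inl (b * x)"
| "lact_v lm b (Inr n) = Inr (lm b n)"

fun ract_v :: "('m \<Rightarrow> 'a \<Rightarrow> 'm) \<Rightarrow> 'a + 'm \<Rightarrow> 'a::ring_1 \<Rightarrow> 'a + 'm" where
  "ract_v rm (Inl x) b = Inl (x * b)"
| "ract_v rm (Inr n) b = Inr (rm n b)"

text \<open>x \<mapsto> x m (A to M) and x \<mapsto> m x (A to M); letters of sort M are left unchanged (never used).\<close>
fun toM_r :: "('a \<Rightarrow> 'm \<Rightarrow> 'm) \<Rightarrow> 'a + 'm \<Rightarrow> 'm \<Rightarrow> 'a + 'm" where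
  "toM_r lm (Inl x) m = Inr (lm x m)"
| "toM_r lm (Inr n) m = Inr n"

fun toM_l :: "('m \<Rightarrow> 'a \<Rightarrow> 'm) \<Rightarrow> 'm \<Rightarrow> 'a + 'm \<Rightarrow> 'a + 'm" where
  "toM_l rm m (Inl x) = Inr (rm m x)"
| "toM_l rm m (Inr n) = Inr n"

definition add3V :: "('a::ring_1) + ('m::ab_group_add) \<Rightarrow> 'a + 'm \<Rightarrow> 'a + 'm \<Rightarrow> bool" where
  "add3V s x y \<longleftrightarrow> (\<exists>a b. x = Inl a \<and> y = Inl b \<and> s = Inl (a + b))
                  \<or> (\<exists>m n. x = Inr m \<and> y = Inr n \<and> s = Inr (m + n))"

definition teqV :: "('k \<Rightarrow> 'a::ring_1) \<Rightarrow> ('a \<Rightarrow> 'm::ab_group_add \<Rightarrow> 'm)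
   \<Rightarrow> (('a + 'm) list \<Rightarrow>\<^sub>0 int) \<Rightarrow> (('a + 'm) list \<Rightarrow>\<^sub>0 int) \<Rightarrow> bool" where
  "teqV \<iota> lm = teq (\<lambda>c v. lact_v lm (\<iota> c) v) add3V"

definition w2V :: "('a \<times> 'a \<Rightarrow>\<^sub>0 int) \<Rightarrow> (('a + 'm) list \<Rightarrow>\<^sub>0 int)" where
  "w2V T = lmap (\<lambda>(x, y). [Inl x, Inl y]) T"

definition eAM :: "('a \<times> 'm \<Rightarrow>\<^sub>0 int) \<times> ('m \<times> 'a \<Rightarrow>\<^sub>0 int) \<Rightarrow> (('a + 'm) list \<Rightarrow>\<^sub>0 int)" where
  "eAM PQ = lmap (\<lambda>(x, n). [Inl x, Inr n]) (fst PQ) + lmap (\<lambda>(n, x). [Inr n, Inl x]) (snd PQ)"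

fun dbv :: "('a \<Rightarrow> 'a \<Rightarrow> ('a \<times> 'a \<Rightarrow>\<^sub>0 int)) \<Rightarrow> ('a \<Rightarrow> 'm \<Rightarrow> ('a \<times> 'm \<Rightarrow>\<^sub>0 int) \<times> ('m \<times> 'a \<Rightarrow>\<^sub>0 int))
    \<Rightarrow> 'a + 'm \<Rightarrow> 'a + 'm \<Rightarrow> (('a + 'm) list \<Rightarrow>\<^sub>0 int)" where
  "dbv dbr dbm (Inl a) (Inl b) = w2V (dbr a b)"
| "dbv dbr dbm (Inl a) (Inr m) = eAM (dbm a m)"
| "dbv dbr dbm (Inr m) (Inl b) = - lmap rev (eAM (dbm b m))"
| "dbv dbr dbm (Inr m) (Inr n) = 0"

definition dbLV :: "('a \<Rightarrow> 'a \<Rightarrow> ('a \<times> 'a \<Rightarrow>\<^sub>0 int)) \<Rightarrow> ('a \<Rightarrow> 'm \<Rightarrow> ('a \<times> 'm \<Rightarrow>\<^sub>0 int) \<times> ('m \<times> 'a \<Rightarrow>\<^sub>0 int))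
    \<Rightarrow> 'a + 'm \<Rightarrow> (('a + 'm) list \<Rightarrow>\<^sub>0 int) \<Rightarrow> (('a + 'm) list \<Rightarrow>\<^sub>0 int)" where
  "dbLV dbr dbm x T = frag_extend
     (\<lambda>w. case w of [] \<Rightarrow> 0 | y # r \<Rightarrow> lmap (\<lambda>u. u @ r) (dbv dbr dbm x y)) T"

definition double_poisson_bimodule :: "('k::field \<Rightarrow> 'a::ring_1) \<Rightarrow> ('a \<Rightarrow> 'm::ab_group_add \<Rightarrow> 'm) \<Rightarrow> ('m \<Rightarrow> 'a \<Rightarrow> 'm)
    \<Rightarrow> ('a \<Rightarrow> 'a \<Rightarrow> ('a \<times> 'a \<Rightarrow>\<^sub>0 int)) \<Rightarrow> ('a \<Rightarrow> 'm \<Rightarrow> ('a \<times> 'm \<Rightarrow>\<^sub>0 int) \<times> ('m \<times> 'a \<Rightarrow>\<^sub>0 int)) \<Rightarrow> bool" where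
  "double_poisson_bimodule \<iota> lm rm dbr dbm \<longleftrightarrow> bimodule \<iota> lm rm \<and>
    \<comment> \<open>k-bilinearity\<close>
    (\<forall>a a' m. teqV \<iota> lm (eAM (dbm (a + a') m)) (eAM (dbm a m) + eAM (dbm a' m))) \<and>
    (\<forall>a m m'. teqV \<iota> lm (eAM (dbm a (m + m'))) (eAM (dbm a m) + eAM (dbm a m'))) \<and>
    (\<forall>c a m. teqV \<iota> lm (eAM (dbm (\<iota> c * a) m)) (lmap (map_first (lact_v lm (\<iota> c))) (eAM (dbm a m)))) \<and>
    (\<forall>c a m. teqV \<iota> lm (eAM (dbm a (lm (\<iota> c) m))) (lmap (map_first (lact_v lm (\<iota> c))) (eAM (dbm a m)))) \<and>
    \<comment> \<open>(i)\<close>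
    (\<forall>a b m. teqV \<iota> lm (eAM (dbm a (lm b m)))
        (lmap (map_last (\<lambda>x. toM_r lm x m)) (w2V (dbr a b)) + lmap (map_first (lact_v lm b)) (eAM (dbm a m)))) \<and>
    (\<forall>a b m. teqV \<iota> lm (eAM (dbm a (rm m b)))
        (lmap (map_last (\<lambda>x. ract_v rm x b)) (eAM (dbm a m)) + lmap (map_first (toM_l rm m)) (w2V (dbr a b)))) \<and>
    \<comment> \<open>(ii): inner structure  b * (u \<otimes> v) * c = u c \<otimes> b v\<close>
    (\<forall>a b m. teqV \<iota> lm (eAM (dbm (a * b) m))
        (lmap (map_last (lact_v lm a)) (eAM (dbm b m)) + lmap (map_first (\<lambda>x. ract_v rm x b)) (eAM (dbm a m)))) \<and>
    \<comment> \<open>(iii)\<close>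
    (\<forall>a b m. teqV \<iota> lm
       (dbLV dbr dbm (Inl a) (dbv dbr dbm (Inl b) (Inr m))
        + lmap rot123 (dbLV dbr dbm (Inl b) (dbv dbr dbm (Inr m) (Inl a)))
        + lmap rot132 (dbLV dbr dbm (Inr m) (dbv dbr dbm (Inl a) (Inl b)))) 0)"

definition brA :: "('a::ring_1 \<Rightarrow> 'a \<Rightarrow> ('a \<times> 'a \<Rightarrow>\<^sub>0 int)) \<Rightarrow> 'a \<Rightarrow> 'a \<Rightarrow> 'a" where
  "brA dbr a b = fsum (\<lambda>(x, y). x * y) (dbr a b)"

definition brM :: "('a \<Rightarrow> 'm::ab_group_add \<Rightarrow> 'm) \<Rightarrow> ('m \<Rightarrow> 'a \<Rightarrow> 'm)
    \<Rightarrow> ('a \<Rightarrow> 'm \<Rightarrow> ('a \<times> 'm \<Rightarrow>\<^sub>0 int) \<times> ('m \<times> 'a \<Rightarrow>\<^sub>0 int)) \<Rightarrow> 'a \<Rightarrow> 'm \<Rightarrow> 'm" where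
  "brM lm rm dbm a m = fsum (\<lambda>(x, n). lm x n) (fst (dbm a m)) + fsum (\<lambda>(n, x). rm n x) (snd (dbm a m))"

inductive_set add_span :: "'g::ab_group_add set \<Rightarrow> 'g set" for S where
  as_gen: "x \<in> S \<Longrightarrow> x \<in> add_span S"
| as_zero: "0 \<in> add_span S"
| as_plus: "x \<in> add_span S \<Longrightarrow> y \<in> add_span S \<Longrightarrow> x + y \<in> add_span S"
| as_neg: "x \<in> add_span S \<Longrightarrow> - x \<in> add_span S"

text \<open>[A,A] and [A,M] (their additive spans are already k-subspaces).\<close>
definition commA :: "'a::ring_1 set" where
  "commA = add_span {x * y - y * x | x y. True}"

definition commM :: "('a \<Rightarrow> 'm::ab_group_add \<Rightarrow> 'm) \<Rightarrow> ('m \<Rightarrow> 'a \<Rightarrow> 'm) \<Rightarrow> 'm set" where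
  "commM lm rm = add_span {lm a m - rm m a | a m. True}"

text \<open>act :: 'a \<Rightarrow> 'n \<Rightarrow> 'n induces a well-defined k-bilinear map (A/I) \<times> (n/N) \<rightarrow> n/N making n/N
  a Lie module over the Lie algebra (A/I, bracket induced by br).\<close>
definition induces_lie_module :: "('k \<Rightarrow> 'a::ab_group_add \<Rightarrow> 'a) \<Rightarrow> ('k \<Rightarrow> 'n::ab_group_add \<Rightarrow> 'n)
    \<Rightarrow> ('a \<Rightarrow> 'a \<Rightarrow> 'a) \<Rightarrow> 'a set \<Rightarrow> ('a \<Rightarrow> 'n \<Rightarrow> 'n) \<Rightarrow> 'n set \<Rightarrow> bool" where
  "induces_lie_module scA scN br I act N \<longleftrightarrow>
     (\<forall>x\<in>I. \<forall>n. act x n \<in> N) \<and> (\<forall>a. \<forall>n\<in>N. act a n \<in> N) \<and>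
     (\<forall>a a' n. act (a + a') n - (act a n + act a' n) \<in> N) \<and>
     (\<forall>a n n'. act a (n + n') - (act a n + act a n') \<in> N) \<and>
     (\<forall>c a n. act (scA c a) n - scN c (act a n) \<in> N) \<and>
     (\<forall>c a n. act a (scN c n) - scN c (act a n) \<in> N) \<and>
     (\<forall>a b n. act (br a b) n - (act a (act b n) - act b (act a n)) \<in> N)"

end

theory Submission
  imports Defs
begin

text \<open>
  The brackets are obtained by applying the multiplication maps to representatives of the double
  brackets; these maps are multiadditive and k-balanced, so they are constant on tensor classes and
  every identity between double brackets becomes an identity between brackets. Axioms (i) and (ii)
  turn into Leibniz rules: \<open>{a, b m} = {a,b} m + b {a,m}\<close>, similarly on the right, and
  \<open>{b c, m}\<close> is the sum of the two sandwiches \<open>{{b,m}}' c {{b,m}}''\<close> and \<open>{{c,m}}' b {{c,m}}''\<close>.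
  Expanding \<open>{a,{b,m}}\<close> by the Leibniz rules and \<open>{{a,b},m}\<close> by the sandwich rule, the
  multiplied form of (iii) together with skew-symmetry of \<open>{{a,b}}\<close> gives the Jacobi identity.
  The sandwich rule shows that \<open>[A,A]\<close> acts by zero, and the Leibniz rules that \<open>[A,M]\<close> is stable.
\<close>

lemma zmul_0 [simp]: "zmul 0 x = 0"
  by (simp add: zmul_def)

lemma zmul_1 [simp]: "zmul 1 x = x"
  by (simp add: zmul_def)

lemma zmul_neg: "zmul (- n) x = - zmul n x"
  by (cases "n = 0") (auto simp: zmul_def)

lemma zmul_add_right: "zmul n (x + y) = zmul n x + zmul n y"
  by (simp add: zmul_def sum.distrib)

lemma zmul_minus_right: "zmul n (- x) = - zmul n x"
  by (simp add: zmul_def sum_negf)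

lemma zmul_succ: "zmul (n + 1) x = zmul n x + x"
proof (cases "0 \<le> n")
  case True
  then have "nat (n + 1) = Suc (nat n)" by simp
  with True show ?thesis by (simp add: zmul_def add.commute)
next
  case False
  then have "nat (- n) = Suc (nat (- (n + 1)))" by simp
  with False show ?thesis by (auto simp: zmul_def)
qed

lemma zmul_add_left: "zmul (m + n) x = zmul m x + zmul n x"
proof (induction n rule: int_induct[where k = 0])
  case base
  then show ?case by simp
next
  case (step1 i)
  then show ?case using zmul_succ[of "m + i" x] zmul_succ[of i x] by (simp add: add.assoc)
next
  case (step2 i)
  then show ?case using zmul_succ[of "m + i - 1" x] zmul_succ[of "i - 1" x] by (simp add: algebra_simps)
qed

lemma fsum_superset:
  assumes "finite S" "Poly_Mapping.keys T \<subseteq> S"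
  shows "fsum f T = (\<Sum>w\<in>S. zmul (Poly_Mapping.lookup T w) (f w))"
  unfolding fsum_def
  by (rule sum.mono_neutral_left) (use assms in \<open>auto simp: in_keys_iff\<close>)

lemma fsum_0 [simp]: "fsum f 0 = 0"
  by (simp add: fsum_def)

lemma fsum_frag_of [simp]: "fsum f (frag_of w) = f w"
  by (simp add: fsum_def keys_frag_of)

lemma fsum_add: "fsum f (T + U) = fsum f T + fsum f U"
proof -
  let ?S = "Poly_Mapping.keys T \<union> Poly_Mapping.keys U"
  have "fsum f (T + U) = (\<Sum>w\<in>?S. zmul (Poly_Mapping.lookup (T + U) w) (f w))"
    by (rule fsum_superset) (auto simp: keys_add)
  also have "\<dots> = (\<Sum>w\<in>?S. zmul (Poly_Mapping.lookup T w) (f w))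
                 + (\<Sum>w\<in>?S. zmul (Poly_Mapping.lookup U w) (f w))"
    by (simp add: lookup_add zmul_add_left sum.distrib)
  also have "\<dots> = fsum f T + fsum f U"
    by (simp add: fsum_superset[symmetric])
  finally show ?thesis .
qed

lemma fsum_neg: "fsum f (- T) = - fsum f T"
  by (simp add: fsum_def zmul_neg sum_negf)

lemma fsum_diff: "fsum f (T - U) = fsum f T - fsum f U"
  using fsum_add[of f T "- U"] fsum_neg[of f U] by simp

lemma fsum_fun_add: "fsum (\<lambda>w. f w + g w) T = fsum f T + fsum g T"
  by (simp add: fsum_def zmul_add_right sum.distrib)

lemma fsum_fun_neg: "fsum (\<lambda>w. - f w) T = - fsum f T"
  by (simp add: fsum_def zmul_minus_right sum_negf)

lemma fsum_fun_diff: "fsum (\<lambda>w. f w - g w) T = fsum f T - fsum g T"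
  using fsum_fun_add[of f "\<lambda>w. - g w" T] by (simp add: fsum_fun_neg)

lemma fsum_cong: "(\<And>w. w \<in> Poly_Mapping.keys T \<Longrightarrow> f w = g w) \<Longrightarrow> fsum f T = fsum g T"
  by (simp add: fsum_def)

lemma fsum_additive:
  assumes "\<And>x y. g (x + y) = g x + g y"
  shows "fsum (\<lambda>w. g (f w)) T = g (fsum f T)"
proof -
  have g_diff: "g (x - y) = g x - g y" for x y
    using assms[of "x - y" y] by (simp add: eq_diff_eq)
  have g_0: "g 0 = 0"
    using assms[of 0 0] by simp
  show ?thesis
    using subset_UNIV by (induction T rule: frag_induction) (auto simp: fsum_diff g_diff g_0)
qed

lemma fsum_frag_extend: "fsum f (frag_extend h T) = fsum (\<lambda>w. fsum f (h w)) T"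
  using subset_UNIV
  by (induction T rule: frag_induction) (auto simp: frag_extend_diff fsum_diff)

lemma fsum_lmap: "fsum f (lmap g T) = fsum (\<lambda>w. f (g w)) T"
  by (simp add: lmap_def fsum_frag_extend)

lemma fsum_w2A: "fsum f (w2A T) = fsum (\<lambda>(x, y). f [x, y]) T"
  by (simp add: w2A_def fsum_lmap case_prod_unfold)

lemma fsum_w2V: "fsum f (w2V T) = fsum (\<lambda>(x, y). f [Inl x, Inl y]) T"
  by (simp add: w2V_def fsum_lmap case_prod_unfold)

lemma fsum_eAM:
  "fsum f (eAM PQ) = fsum (\<lambda>(x, n). f [Inl x, Inr n]) (fst PQ) + fsum (\<lambda>(n, x). f [Inr n, Inl x]) (snd PQ)"
  by (simp add: eAM_def fsum_add fsum_lmap case_prod_unfold)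

lemma fsum_dbLV:
  "fsum f (dbLV dbr dbm x T)
     = fsum (\<lambda>w. case w of [] \<Rightarrow> 0 | y # r \<Rightarrow> fsum (\<lambda>u. f (u @ r)) (dbv dbr dbm x y)) T"
  unfolding dbLV_def fsum_frag_extend
  by (rule fsum_cong) (auto simp: fsum_lmap split: list.split)

section \<open>Maps on words that descend to tensor products\<close>

definition multiadditive_balanced ::
    "('v list \<Rightarrow> 'g::ab_group_add) \<Rightarrow> ('k \<Rightarrow> 'v \<Rightarrow> 'v) \<Rightarrow> ('v \<Rightarrow> 'v \<Rightarrow> 'v \<Rightarrow> bool) \<Rightarrow> bool" where
  "multiadditive_balanced f sc add3 \<longleftrightarrow>
     (\<forall>s x y u v. add3 s x y \<longrightarrow> f (u @ s # v) = f (u @ x # v) + f (u @ y # v)) \<and>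
     (\<forall>u c x v y w. f (u @ sc c x # v @ y # w) = f (u @ x # v @ sc c y # w))"

lemma fsum_trel_eq_0:
  "p \<in> trel sc add3 \<Longrightarrow> multiadditive_balanced f sc add3 \<Longrightarrow> fsum f p = 0"
  by (induction p rule: trel.induct) (auto simp: multiadditive_balanced_def fsum_add fsum_diff fsum_neg)

lemma fsum_teq:
  "teq sc add3 x y \<Longrightarrow> multiadditive_balanced f sc add3 \<Longrightarrow> fsum f x = fsum f y"
  unfolding teq_def using fsum_trel_eq_0[of "x - y" sc add3 f] by (simp add: fsum_diff)

text \<open>
  The multiplication maps are 0 on words of length other than 2 and 3 and on sort patterns that
  never occur in the double brackets.
\<close>

definition act2 :: "('a \<Rightarrow> 'm \<Rightarrow> 'm) \<Rightarrow> ('m \<Rightarrow> 'a \<Rightarrow> 'm) \<Rightarrow> 'a + 'm \<Rightarrow> 'a + 'm \<Rightarrow> 'm::ab_group_add" where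
  "act2 lm rm p q = (case p of
      Inl x \<Rightarrow> (case q of Inl _ \<Rightarrow> 0 | Inr n \<Rightarrow> lm x n)
    | Inr n \<Rightarrow> (case q of Inl x \<Rightarrow> rm n x | Inr _ \<Rightarrow> 0))"

definition act3 ::
    "('a::ring_1 \<Rightarrow> 'm \<Rightarrow> 'm) \<Rightarrow> ('m \<Rightarrow> 'a \<Rightarrow> 'm) \<Rightarrow> 'a + 'm \<Rightarrow> 'a + 'm \<Rightarrow> 'a + 'm \<Rightarrow> 'm::ab_group_add" where
  "act3 lm rm p q r = (case p of
      Inl x \<Rightarrow> (case q of
          Inl y \<Rightarrow> (case r of Inl _ \<Rightarrow> 0 | Inr n \<Rightarrow> lm (x * y) n)
        | Inr n \<Rightarrow> (case r of Inl y \<Rightarrow> rm (lm x n) y | Inr _ \<Rightarrow> 0))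
    | Inr n \<Rightarrow> (case q of Inl x \<Rightarrow> (case r of Inl y \<Rightarrow> rm n (x * y) | Inr _ \<Rightarrow> 0) | Inr _ \<Rightarrow> 0))"

definition act_word :: "('a::ring_1 \<Rightarrow> 'm \<Rightarrow> 'm) \<Rightarrow> ('m \<Rightarrow> 'a \<Rightarrow> 'm) \<Rightarrow> ('a + 'm) list \<Rightarrow> 'm::ab_group_add" where
  "act_word lm rm w =
     (if length w = 2 then act2 lm rm (w ! 0) (w ! 1)
      else if length w = 3 then act3 lm rm (w ! 0) (w ! 1) (w ! 2) else 0)"

definition sandwich2 ::
    "('a::ring_1 \<Rightarrow> 'm \<Rightarrow> 'm) \<Rightarrow> ('m \<Rightarrow> 'a \<Rightarrow> 'm) \<Rightarrow> 'a \<Rightarrow> 'a + 'm \<Rightarrow> 'a + 'm \<Rightarrow> 'm::ab_group_add" where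
  "sandwich2 lm rm c p q = (case p of
      Inl x \<Rightarrow> (case q of Inl _ \<Rightarrow> 0 | Inr n \<Rightarrow> lm (x * c) n)
    | Inr n \<Rightarrow> (case q of Inl x \<Rightarrow> rm n (c * x) | Inr _ \<Rightarrow> 0))"

definition sandwich_word ::
    "('a::ring_1 \<Rightarrow> 'm \<Rightarrow> 'm) \<Rightarrow> ('m \<Rightarrow> 'a \<Rightarrow> 'm) \<Rightarrow> 'a \<Rightarrow> ('a + 'm) list \<Rightarrow> 'm::ab_group_add" where
  "sandwich_word lm rm c w = (if length w = 2 then sandwich2 lm rm c (w ! 0) (w ! 1) else 0)"

lemma list_cases2: obtains "u = []" | a where "u = [a]" | a b r where "u = a # b # r"
  by (metis list.exhaust)

lemma list_cases3:
  obtains "u = []" | a where "u = [a]" | a b where "u = [a, b]" | a b c r where "u = a # b # c # r"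
  by (metis list.exhaust)

lemma map_last_pair [simp]: "map_last f [x, y] = [x, f y]"
  by (simp add: map_last_def)

section \<open>The brackets of a double Poisson bimodule\<close>

locale double_poisson_bimodule_setting =
  fixes \<iota> :: "'k::field \<Rightarrow> 'a::ring_1"
    and lm :: "'a \<Rightarrow> 'm::ab_group_add \<Rightarrow> 'm" and rm :: "'m \<Rightarrow> 'a \<Rightarrow> 'm"
    and dbr :: "'a \<Rightarrow> 'a \<Rightarrow> ('a \<times> 'a \<Rightarrow>\<^sub>0 int)"
    and dbm :: "'a \<Rightarrow> 'm \<Rightarrow> ('a \<times> 'm \<Rightarrow>\<^sub>0 int) \<times> ('m \<times> 'a \<Rightarrow>\<^sub>0 int)"
  assumes algebra: "k_algebra \<iota>" and double_bracket: "double_bracket \<iota> dbr"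
    and poisson_bimodule: "double_poisson_bimodule \<iota> lm rm dbr dbm"
begin

abbreviation brm :: "'a \<Rightarrow> 'm \<Rightarrow> 'm" where "brm \<equiv> brM lm rm dbm"
abbreviation bra :: "'a \<Rightarrow> 'a \<Rightarrow> 'a" where "bra \<equiv> brA dbr"

lemma central: "\<iota> c * a = a * \<iota> c"
  using algebra by (simp add: k_algebra_def)

lemma bimodule: "bimodule \<iota> lm rm"
  using poisson_bimodule by (simp add: double_poisson_bimodule_def)

lemma lm_mult: "lm (a * b) m = lm a (lm b m)"
  and lm_add_left [simp]: "lm (a + b) m = lm a m + lm b m"
  and lm_add_right [simp]: "lm a (m + n) = lm a m + lm a n"
  and rm_mult: "rm m (a * b) = rm (rm m a) b"
  and rm_add_right [simp]: "rm m (a + b) = rm m a + rm m b"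
  and rm_add_left [simp]: "rm (m + n) a = rm m a + rm n a"
  and rm_lm: "rm (lm a m) b = lm a (rm m b)"
  and rm_iota: "rm m (\<iota> c) = lm (\<iota> c) m"
  using bimodule by (simp_all add: bimodule_def)

lemma lm_iota_commute: "lm a (lm (\<iota> c) n) = lm (\<iota> c) (lm a n)"
  by (metis central lm_mult)

lemmas bimodule_simps = lm_mult rm_mult rm_lm distrib_left distrib_right mult.assoc
lemmas iota_simps = lm_iota_commute rm_iota

lemma lm_fsum_left: "lm (fsum f T) n = fsum (\<lambda>w. lm (f w) n) T"
  by (rule fsum_additive[symmetric]) simp

lemma lm_fsum_right: "lm a (fsum f T) = fsum (\<lambda>w. lm a (f w)) T"
  by (rule fsum_additive[symmetric]) simp

lemma rm_fsum_left: "rm (fsum f T) b = fsum (\<lambda>w. rm (f w) b) T"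
  by (rule fsum_additive[symmetric]) simp

lemma rm_fsum_right: "rm n (fsum f T) = fsum (\<lambda>w. rm n (f w)) T"
  by (rule fsum_additive[symmetric]) simp

lemmas fsum_push = lm_fsum_left lm_fsum_right rm_fsum_left rm_fsum_right fsum_fun_add fsum_fun_neg fsum_fun_diff

lemma act2_add:
  assumes "add3V s x y"
  shows "act2 lm rm s q = act2 lm rm x q + act2 lm rm y q"
    and "act2 lm rm p s = act2 lm rm p x + act2 lm rm p y"
  using assms by (auto simp: add3V_def act2_def split: sum.split)

lemma act3_add:
  assumes "add3V s x y"
  shows "act3 lm rm s q r = act3 lm rm x q r + act3 lm rm y q r"
    and "act3 lm rm p s r = act3 lm rm p x r + act3 lm rm p y r"
    and "act3 lm rm p q s = act3 lm rm p q x + act3 lm rm p q y"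
  using assms by (auto simp: add3V_def act3_def bimodule_simps split: sum.split)

lemma act2_balanced: "act2 lm rm (lact_v lm (\<iota> c) x) y = act2 lm rm x (lact_v lm (\<iota> c) y)"
  by (cases x; cases y) (auto simp: act2_def bimodule_simps iota_simps)

lemma act3_balanced:
  "act3 lm rm (lact_v lm (\<iota> c) x) y z = act3 lm rm x (lact_v lm (\<iota> c) y) z"
  "act3 lm rm (lact_v lm (\<iota> c) x) z y = act3 lm rm x z (lact_v lm (\<iota> c) y)"
  "act3 lm rm z (lact_v lm (\<iota> c) x) y = act3 lm rm z x (lact_v lm (\<iota> c) y)"
  by (cases x; cases y; cases z; auto simp: act3_def bimodule_simps iota_simps)+

lemma act_word_multiadditive_balanced:
  "multiadditive_balanced (act_word lm rm) (\<lambda>c v. lact_v lm (\<iota> c) v) add3V"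
  unfolding multiadditive_balanced_def
proof (intro conjI allI impI)
  fix s x y :: "'a + 'm" and u v
  assume "add3V s x y"
  then show "act_word lm rm (u @ s # v) = act_word lm rm (u @ x # v) + act_word lm rm (u @ y # v)"
    by (cases u rule: list_cases3; cases v rule: list_cases3)
      (simp_all add: act_word_def act2_add act3_add)
next
  fix u c v w and x y :: "'a + 'm"
  show "act_word lm rm (u @ lact_v lm (\<iota> c) x # v @ y # w)
      = act_word lm rm (u @ x # v @ lact_v lm (\<iota> c) y # w)"
    by (cases u rule: list_cases2; cases v rule: list_cases2; cases w rule: list_cases2)
      (simp_all add: act_word_def act2_balanced act3_balanced)
qed

lemma sandwich2_add:
  assumes "add3V s x y"
  shows "sandwich2 lm rm c s q = sandwich2 lm rm c x q + sandwich2 lm rm c y q"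
    and "sandwich2 lm rm c p s = sandwich2 lm rm c p x + sandwich2 lm rm c p y"
  using assms by (auto simp: add3V_def sandwich2_def bimodule_simps split: sum.split)

lemma sandwich2_balanced:
  "sandwich2 lm rm c (lact_v lm (\<iota> d) x) y = sandwich2 lm rm c x (lact_v lm (\<iota> d) y)"
  by (cases x; cases y) (auto simp: sandwich2_def bimodule_simps iota_simps)

lemma sandwich_word_multiadditive_balanced:
  "multiadditive_balanced (sandwich_word lm rm c) (\<lambda>c v. lact_v lm (\<iota> c) v) add3V"
  unfolding multiadditive_balanced_def
proof (intro conjI allI impI)
  fix s x y :: "'a + 'm" and u v
  assume "add3V s x y"
  then show "sandwich_word lm rm c (u @ s # v)
      = sandwich_word lm rm c (u @ x # v) + sandwich_word lm rm c (u @ y # v)"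
    by (cases u rule: list_cases2; cases v rule: list_cases2)
      (simp_all add: sandwich_word_def sandwich2_add)
next
  fix u d v w and x y :: "'a + 'm"
  show "sandwich_word lm rm c (u @ lact_v lm (\<iota> d) x # v @ y # w)
      = sandwich_word lm rm c (u @ x # v @ lact_v lm (\<iota> d) y # w)"
    by (cases u rule: list_cases2; cases v rule: list_cases2; cases w rule: list_cases2)
      (simp_all add: sandwich_word_def sandwich2_balanced)
qed

lemma fsum_act_word_teqV: "teqV \<iota> lm X Y \<Longrightarrow> fsum (act_word lm rm) X = fsum (act_word lm rm) Y"
  unfolding teqV_def using fsum_teq act_word_multiadditive_balanced by blast

lemma fsum_sandwich_word_teqV:
  "teqV \<iota> lm X Y \<Longrightarrow> fsum (sandwich_word lm rm c) X = fsum (sandwich_word lm rm c) Y"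
  unfolding teqV_def using fsum_teq sandwich_word_multiadditive_balanced by blast

lemma act_word_simps [simp]:
  "act_word lm rm [Inl x, Inr n] = lm x n"
  "act_word lm rm [Inr n, Inl x] = rm n x"
  "act_word lm rm [Inl x, Inl y, Inr n] = lm (x * y) n"
  "act_word lm rm [Inl x, Inr n, Inl y] = rm (lm x n) y"
  "act_word lm rm [Inr n, Inl x, Inl y] = rm n (x * y)"
  by (simp_all add: act_word_def act2_def act3_def)

lemma sandwich_word_simps [simp]:
  "sandwich_word lm rm c [Inl x, Inr n] = lm (x * c) n"
  "sandwich_word lm rm c [Inr n, Inl x] = rm n (c * x)"
  by (simp_all add: sandwich_word_def sandwich2_def)

lemma brM_eq_fsum_act_word: "brm a m = fsum (act_word lm rm) (eAM (dbm a m))"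
  by (simp add: brM_def fsum_eAM case_prod_unfold)

lemma brM_add_left: "brm (a + a') m = brm a m + brm a' m"
proof -
  have "teqV \<iota> lm (eAM (dbm (a + a') m)) (eAM (dbm a m) + eAM (dbm a' m))"
    using poisson_bimodule by (simp add: double_poisson_bimodule_def)
  from fsum_act_word_teqV[OF this] show ?thesis
    unfolding brM_eq_fsum_act_word by (simp add: fsum_add)
qed

lemma brM_add_right: "brm a (m + m') = brm a m + brm a m'"
proof -
  have "teqV \<iota> lm (eAM (dbm a (m + m'))) (eAM (dbm a m) + eAM (dbm a m'))"
    using poisson_bimodule by (simp add: double_poisson_bimodule_def)
  from fsum_act_word_teqV[OF this] show ?thesis
    unfolding brM_eq_fsum_act_word by (simp add: fsum_add)
qed

lemma brM_zero_left [simp]: "brm 0 m = 0"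
  using brM_add_left[of 0 0 m] by simp

lemma brM_zero_right [simp]: "brm a 0 = 0"
  using brM_add_right[of a 0 0] by simp

lemma brM_diff_left: "brm (x - y) m = brm x m - brm y m"
  by (metis add_diff_cancel brM_add_left diff_add_cancel)

lemma brM_diff_right: "brm a (n - n') = brm a n - brm a n'"
  by (metis add_diff_cancel brM_add_right diff_add_cancel)

lemma brM_fsum_left: "brm (fsum f T) n = fsum (\<lambda>w. brm (f w) n) T"
  by (rule fsum_additive[symmetric]) (simp add: brM_add_left)

lemma brM_fsum_right: "brm a (fsum f T) = fsum (\<lambda>w. brm a (f w)) T"
  by (rule fsum_additive[symmetric]) (simp add: brM_add_right)

lemma brM_scale_left: "brm (\<iota> c * a) m = lm (\<iota> c) (brm a m)"
proof -
  have "teqV \<iota> lm (eAM (dbm (\<iota> c * a) m)) (lmap (map_first (lact_v lm (\<iota> c))) (eAM (dbm a m)))"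
    using poisson_bimodule by (simp add: double_poisson_bimodule_def)
  from fsum_act_word_teqV[OF this] show ?thesis
    unfolding brM_eq_fsum_act_word
    by (simp add: fsum_lmap fsum_eAM fsum_push case_prod_unfold bimodule_simps)
qed

lemma brM_scale_right: "brm a (lm (\<iota> c) m) = lm (\<iota> c) (brm a m)"
proof -
  have "teqV \<iota> lm (eAM (dbm a (lm (\<iota> c) m))) (lmap (map_first (lact_v lm (\<iota> c))) (eAM (dbm a m)))"
    using poisson_bimodule by (simp add: double_poisson_bimodule_def)
  from fsum_act_word_teqV[OF this] show ?thesis
    unfolding brM_eq_fsum_act_word
    by (simp add: fsum_lmap fsum_eAM fsum_push case_prod_unfold bimodule_simps)
qed

lemma brM_lm: "brm a (lm x n) = lm (bra a x) n + lm x (brm a n)"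
proof -
  have "teqV \<iota> lm (eAM (dbm a (lm x n)))
     (lmap (map_last (\<lambda>v. toM_r lm v n)) (w2V (dbr a x)) + lmap (map_first (lact_v lm x)) (eAM (dbm a n)))"
    using poisson_bimodule by (simp add: double_poisson_bimodule_def)
  from fsum_act_word_teqV[OF this] show ?thesis
    unfolding brM_eq_fsum_act_word
    by (simp add: fsum_add fsum_lmap fsum_eAM fsum_w2V brA_def fsum_push
        case_prod_unfold bimodule_simps)
qed

lemma brM_rm: "brm a (rm n x) = rm (brm a n) x + rm n (bra a x)"
proof -
  have "teqV \<iota> lm (eAM (dbm a (rm n x)))
     (lmap (map_last (\<lambda>v. ract_v rm v x)) (eAM (dbm a n)) + lmap (map_first (toM_l rm n)) (w2V (dbr a x)))"
    using poisson_bimodule by (simp add: double_poisson_bimodule_def)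
  from fsum_act_word_teqV[OF this] show ?thesis
    unfolding brM_eq_fsum_act_word
    by (simp add: fsum_add fsum_lmap fsum_eAM fsum_w2V brM_def brA_def fsum_push
        case_prod_unfold bimodule_simps)
qed

text \<open>\<open>sandwich c b m\<close> is \<open>\<mu>\<^sub>M({{b,m}}' c {{b,m}}'')\<close>.\<close>

definition sandwich :: "'a \<Rightarrow> 'a \<Rightarrow> 'm \<Rightarrow> 'm" where
  "sandwich c b m = fsum (\<lambda>(y, n). lm (y * c) n) (fst (dbm b m)) + fsum (\<lambda>(n, y). rm n (c * y)) (snd (dbm b m))"

lemma sandwich_eq_fsum_sandwich_word: "sandwich c b m = fsum (sandwich_word lm rm c) (eAM (dbm b m))"
  by (simp add: sandwich_def fsum_eAM case_prod_unfold)

lemma sandwich_add_left: "sandwich (c + c') b m = sandwich c b m + sandwich c' b m"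
  by (simp add: sandwich_def fsum_fun_add case_prod_unfold distrib_left distrib_right algebra_simps)

lemma sandwich_add_middle: "sandwich c (b + b') m = sandwich c b m + sandwich c b' m"
proof -
  have "teqV \<iota> lm (eAM (dbm (b + b') m)) (eAM (dbm b m) + eAM (dbm b' m))"
    using poisson_bimodule by (simp add: double_poisson_bimodule_def)
  from fsum_sandwich_word_teqV[OF this] show ?thesis
    unfolding sandwich_eq_fsum_sandwich_word by (simp add: fsum_add)
qed

lemma sandwich_balanced: "sandwich (\<iota> d * c) b m = sandwich c (\<iota> d * b) m"
proof -
  have "teqV \<iota> lm (eAM (dbm (\<iota> d * b) m)) (lmap (map_first (lact_v lm (\<iota> d))) (eAM (dbm b m)))"
    using poisson_bimodule by (simp add: double_poisson_bimodule_def)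
  from fsum_sandwich_word_teqV[OF this] show ?thesis
    unfolding sandwich_eq_fsum_sandwich_word
    by (simp add: fsum_lmap fsum_eAM case_prod_unfold bimodule_simps iota_simps)
qed

lemma brM_mult: "brm (a * b) m = sandwich a b m + sandwich b a m"
proof -
  have "teqV \<iota> lm (eAM (dbm (a * b) m))
     (lmap (map_last (lact_v lm a)) (eAM (dbm b m)) + lmap (map_first (\<lambda>x. ract_v rm x b)) (eAM (dbm a m)))"
    using poisson_bimodule by (simp add: double_poisson_bimodule_def)
  from fsum_act_word_teqV[OF this] show ?thesis
    unfolding brM_eq_fsum_act_word
    by (simp add: fsum_add fsum_lmap fsum_eAM sandwich_def fsum_push
        case_prod_unfold bimodule_simps)
qed

subsection \<open>The Jacobi identity\<close>

definition bracket_into_fst :: "'a \<Rightarrow> 'a \<Rightarrow> 'm \<Rightarrow> 'm" where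
  "bracket_into_fst a b m =
     fsum (\<lambda>(x, n). lm (bra a x) n) (fst (dbm b m)) + fsum (\<lambda>(n, x). rm (brm a n) x) (snd (dbm b m))"

definition bracket_into_snd :: "'a \<Rightarrow> 'a \<Rightarrow> 'm \<Rightarrow> 'm" where
  "bracket_into_snd a b m =
     fsum (\<lambda>(x, n). lm x (brm a n)) (fst (dbm b m)) + fsum (\<lambda>(n, x). rm n (bra a x)) (snd (dbm b m))"

definition sandwich_sum :: "'a \<Rightarrow> 'a \<Rightarrow> 'm \<Rightarrow> 'm" where
  "sandwich_sum a b m = fsum (\<lambda>(u, v). sandwich v u m) (dbr a b)"

lemma brM_brM: "brm a (brm b m) = bracket_into_fst a b m + bracket_into_snd a b m"
  unfolding brM_def[of lm rm dbm b m]
  by (simp add: brM_add_right brM_fsum_right case_prod_unfold brM_lm brM_rm fsum_fun_add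
      bracket_into_fst_def bracket_into_snd_def)

lemma fsum_sandwich_skew: "fsum (\<lambda>(u, v). sandwich u v m) (dbr a b) = - sandwich_sum b a m"
proof -
  define f where "f w = (if length w = 2 then sandwich (w ! 0) (w ! 1) m else 0)" for w
  have f_balanced: "multiadditive_balanced f (\<lambda>c a. \<iota> c * a) (\<lambda>s x y. s = x + y)"
    unfolding multiadditive_balanced_def
  proof (intro conjI allI impI)
    fix s x y :: 'a and u v
    assume "s = x + y"
    then show "f (u @ s # v) = f (u @ x # v) + f (u @ y # v)"
      by (cases u rule: list_cases2; cases v rule: list_cases2)
        (simp_all add: f_def sandwich_add_left sandwich_add_middle)
  next
    fix u d v w and x y :: 'a
    show "f (u @ \<iota> d * x # v @ y # w) = f (u @ x # v @ \<iota> d * y # w)"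
      by (cases u rule: list_cases2; cases v rule: list_cases2; cases w rule: list_cases2)
        (simp_all add: f_def sandwich_balanced)
  qed
  have skew: "teqA \<iota> (w2A (dbr a b)) (- lmap rev (w2A (dbr b a)))"
    using double_bracket by (simp add: double_bracket_def)
  have "fsum (\<lambda>(u, v). sandwich u v m) (dbr a b) = fsum f (w2A (dbr a b))"
    by (simp add: fsum_w2A f_def case_prod_unfold)
  also have "\<dots> = fsum f (- lmap rev (w2A (dbr b a)))"
    using skew f_balanced unfolding teqA_def by (rule fsum_teq)
  also have "\<dots> = - sandwich_sum b a m"
    by (simp add: fsum_neg fsum_lmap fsum_w2A sandwich_sum_def f_def case_prod_unfold)
  finally show ?thesis .
qed

lemma brM_brA: "brm (bra a b) m = sandwich_sum a b m - sandwich_sum b a m"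
proof -
  have "brm (bra a b) m = fsum (\<lambda>(u, v). sandwich u v m) (dbr a b) + sandwich_sum a b m"
    unfolding brA_def
    by (simp add: brM_fsum_left brM_mult fsum_fun_add sandwich_sum_def case_prod_unfold)
  then show ?thesis
    by (simp add: fsum_sandwich_skew)
qed

text \<open>This is axiom (iii) after multiplication; its three summands multiply to the three terms.\<close>

lemma bracket_into_fst_eq: "bracket_into_fst a b m = bracket_into_snd b a m + sandwich_sum a b m"
proof -
  have "teqV \<iota> lm
     (dbLV dbr dbm (Inl a) (dbv dbr dbm (Inl b) (Inr m))
      + lmap rot123 (dbLV dbr dbm (Inl b) (dbv dbr dbm (Inr m) (Inl a)))
      + lmap rot132 (dbLV dbr dbm (Inr m) (dbv dbr dbm (Inl a) (Inl b)))) 0"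
    using poisson_bimodule by (simp add: double_poisson_bimodule_def)
  from fsum_act_word_teqV[OF this]
  have "bracket_into_fst a b m + - bracket_into_snd b a m + - sandwich_sum a b m = 0"
    by (simp add: fsum_add fsum_lmap fsum_dbLV fsum_neg fsum_eAM fsum_w2V bracket_into_fst_def bracket_into_snd_def sandwich_sum_def
        sandwich_def brA_def brM_def fsum_push case_prod_unfold bimodule_simps)
  then show ?thesis
    by (simp add: algebra_simps)
qed

lemma jacobi: "brm (bra a b) m = brm a (brm b m) - brm b (brm a m)"
  by (simp add: brM_brA brM_brM bracket_into_fst_eq algebra_simps)

lemma brM_commA: "x \<in> commA \<Longrightarrow> brm x n = 0"
  unfolding commA_def
proof (induction x rule: add_span.induct)
  case (as_gen x)
  then obtain p q where "x = p * q - q * p" by blast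
  then show ?case by (simp add: brM_diff_left brM_mult)
qed (auto simp: brM_add_left brM_diff_left[of 0, simplified])

lemma brM_commM: "n \<in> commM lm rm \<Longrightarrow> brm a n \<in> commM lm rm"
  unfolding commM_def
proof (induction n rule: add_span.induct)
  case (as_gen x)
  then obtain b n where x: "x = lm b n - rm n b" by blast
  have "brm a x = (lm (bra a b) n - rm n (bra a b)) + (lm b (brm a n) - rm (brm a n) b)"
    by (simp add: x brM_diff_right brM_lm brM_rm algebra_simps)
  then show ?case
    by (auto intro: add_span.intros)
qed (auto simp: brM_add_right brM_diff_right[of _ 0, simplified] intro: add_span.intros)

end

theorem proposition3p10:
  fixes \<iota> :: "'k::field \<Rightarrow> 'a::ring_1"
    and lm :: "'a \<Rightarrow> 'm::ab_group_add \<Rightarrow> 'm" and rm :: "'m \<Rightarrow> 'a \<Rightarrow> 'm"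
    and dbr :: "'a \<Rightarrow> 'a \<Rightarrow> ('a \<times> 'a \<Rightarrow>\<^sub>0 int)"
    and dbm :: "'a \<Rightarrow> 'm \<Rightarrow> ('a \<times> 'm \<Rightarrow>\<^sub>0 int) \<times> ('m \<times> 'a \<Rightarrow>\<^sub>0 int)"
  assumes "double_poisson_algebra \<iota> dbr"
    and "double_poisson_bimodule \<iota> lm rm dbr dbm"
  shows "induces_lie_module (\<lambda>c a. \<iota> c * a) (\<lambda>c m. lm (\<iota> c) m) (brA dbr) commA (brM lm rm dbm) {0}
       \<and> induces_lie_module (\<lambda>c a. \<iota> c * a) (\<lambda>c m. lm (\<iota> c) m) (brA dbr) commA (brM lm rm dbm) (commM lm rm)"
proof -
  interpret double_poisson_bimodule_setting \<iota> lm rm dbr dbm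
    using assms by unfold_locales (auto simp: double_poisson_algebra_def)
  have "0 \<in> commM lm rm"
    unfolding commM_def by (rule add_span.as_zero)
  then show ?thesis
    unfolding induces_lie_module_def
    using jacobi brM_commA brM_commM
    by (simp add: brM_add_left brM_add_right brM_scale_left brM_scale_right)
qed

end
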